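(* Let $u_0\in L^2([0,1])$ and $v_0=H(u_0)$. Then $$\sup_{x\in[0,1]}|v_0(x)|\le e^{\Vert u_0\Vert_{L^2}}\quad\text{and}\quad \Vert\partial_x v_0\Vert_{L^2}\le\tfrac12 e^{\Vert u_0\Vert_{L^2}}\Vert u_0\Vert_{L^2}.$$
   Context: $H(u)(x)=\dfrac{e^{-\frac12\int_0^x u(s)ds}}{\int_0^1 e^{-\frac12\int_0^y u(s)ds}\,dy}$ for $u\in L^2([0,1])$, $x\in[0,1]$ (Cole–Hopf transform). *)

theory Defs
  imports "HOL-Analysis.Analysis"
begin

definition in_L2_01 :: "(real \<Rightarrow> real) \<Rightarrow> bool" where
  "in_L2_01 u \<longleftrightarrow> set_borel_measurable lebesgue {0..1} u
      \<and> set_integrable lebesgue {0..1} (\<lambda>x. (u x)\<^sup>2)"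

definition L2norm01 :: "(real \<Rightarrow> real) \<Rightarrow> real" where
  "L2norm01 u = sqrt (LINT x:{0..1}|lebesgue. (u x)\<^sup>2)"

definition cole_hopf :: "(real \<Rightarrow> real) \<Rightarrow> real \<Rightarrow> real" where
  "cole_hopf u x =
     exp (- (1/2) * (LINT s:{0..x}|lebesgue. u s))
     / (LINT y:{0..1}|lebesgue. exp (- (1/2) * (LINT s:{0..y}|lebesgue. u s)))"

end

theory Submission
  imports Defs "HOL-Probability.Probability_Mass_Function"
begin

(* Choose an integrable Borel function a that agrees almost everywhere with u on [0,1] and
   vanishes elsewhere, and let A x = int_0^x a be its primitive. By Cauchy-Schwarz
   ||a||_1 <= ||u||_2 = N, so |A| <= N and H(u) = exp(-A/2) / int_0^1 exp(-A/2) is bounded by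
   exp(N/2) / exp(-N/2) = exp N. The derivative needs no differentiation theory: Fubini gives
   A^(n+1) = (n+1) int_0^x a A^n, and summing the exponential series yields
   exp(c A x) - 1 = c int_0^x a exp(c A). Hence H(u) x = H(u) 0 + int_0^x g with g = - u H(u) / 2,
   and |g| <= exp N |u| / 2 gives the L^2 bound. *)

lemma integrable_mult_bounded:
  fixes a h :: "'a \<Rightarrow> real"
  assumes "integrable M a" "h \<in> borel_measurable M" "\<And>x. \<bar>h x\<bar> \<le> C"
  shows "integrable M (\<lambda>x. a x * h x)"
proof (rule Bochner_Integration.integrable_bound)
  show "integrable M (\<lambda>x. C * a x)"
    using assms(1) by simp
  show "(\<lambda>x. a x * h x) \<in> borel_measurable M"
    using assms(1,2) by measurable
  have "\<bar>a x\<bar> * \<bar>h x\<bar> \<le> \<bar>a x\<bar> * \<bar>C\<bar>" for x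
    by (rule mult_left_mono) (use assms(3) order.trans[OF _ abs_ge_self] in auto)
  then show "AE x in M. norm (a x * h x) \<le> norm (C * a x)"
    by (intro AE_I2) (simp add: abs_mult mult.commute)
qed

lemma (in pair_sigma_finite) integrable_mult_fst_snd:
  fixes f :: "'a \<Rightarrow> real" and g :: "'b \<Rightarrow> real"
  assumes f: "integrable M1 f" and g: "integrable M2 g"
  shows "integrable (M1 \<Otimes>\<^sub>M M2) (\<lambda>p. f (fst p) * g (snd p))"
proof (rule Fubini_integrable)
  have [measurable]: "f \<in> borel_measurable M1" "g \<in> borel_measurable M2"
    using f g by auto
  show "(\<lambda>p. f (fst p) * g (snd p)) \<in> borel_measurable (M1 \<Otimes>\<^sub>M M2)"
    by measurable
  have "integrable M1 (\<lambda>x. norm (f x) * (\<integral>y. norm (g y) \<partial>M2))"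
    using f by (intro integrable_mult_left) auto
  then show "integrable M1 (\<lambda>x. \<integral>y. norm (f (fst (x, y)) * g (snd (x, y))) \<partial>M2)"
    by (simp add: abs_mult)
  show "AE x in M1. integrable M2 (\<lambda>y. f (fst (x, y)) * g (snd (x, y)))"
    using g by auto
qed

lemma (in pair_sigma_finite) iterated_integral_add_swap:
  fixes k l :: "'a \<times> 'b \<Rightarrow> real"
  assumes k: "integrable (M1 \<Otimes>\<^sub>M M2) k" and l: "integrable (M1 \<Otimes>\<^sub>M M2) l"
  shows "(\<integral>x. (\<integral>y. k (x, y) + l (x, y) \<partial>M2) \<partial>M1)
       = (\<integral>y. (\<integral>x. k (x, y) \<partial>M1) \<partial>M2) + (\<integral>x. (\<integral>y. l (x, y) \<partial>M2) \<partial>M1)"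
proof -
  have "(\<integral>x. (\<integral>y. k (x, y) + l (x, y) \<partial>M2) \<partial>M1)
      = integral\<^sup>L (M1 \<Otimes>\<^sub>M M2) (\<lambda>(x, y). k (x, y) + l (x, y))"
    by (rule integral_fst) (use k l in \<open>simp add: split_beta'\<close>)
  also have "\<dots> = integral\<^sup>L (M1 \<Otimes>\<^sub>M M2) k + integral\<^sup>L (M1 \<Otimes>\<^sub>M M2) l"
    using k l by (simp add: split_beta')
  finally show ?thesis
    using integral_snd[of "\<lambda>x y. k (x, y)"] integral_fst[of "\<lambda>x y. l (x, y)"] k l
    by (simp add: split_beta')
qed

lemma integrable_and_integral_abs_squared_le:
  fixes f :: "'a \<Rightarrow> real"
  assumes f[measurable]: "f \<in> borel_measurable M" and f2: "integrable M (\<lambda>x. (f x)\<^sup>2)"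
    and A: "A \<in> sets M" "emeasure M A < \<infinity>"
    and support: "\<And>x. x \<in> space M \<Longrightarrow> x \<notin> A \<Longrightarrow> f x = 0"
  shows "integrable M f" and "(\<integral>x. \<bar>f x\<bar> \<partial>M)\<^sup>2 \<le> measure M A * (\<integral>x. (f x)\<^sup>2 \<partial>M)"
proof -
  have "(\<integral>\<^sup>+x. ennreal \<bar>f x\<bar> * indicator A x \<partial>M)\<^sup>2
      \<le> (\<integral>\<^sup>+x. ennreal \<bar>f x\<bar> ^ 2 \<partial>M) * (\<integral>\<^sup>+x. indicator A x ^ 2 \<partial>M)"
    using A(1) by (intro Cauchy_Schwarz_nn_integral) auto
  also have "(\<integral>\<^sup>+x. ennreal \<bar>f x\<bar> ^ 2 \<partial>M) = ennreal (\<integral>x. (f x)\<^sup>2 \<partial>M)"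
    using f2 by (simp add: ennreal_power nn_integral_eq_integral)
  also have "(\<integral>\<^sup>+x. indicator A x ^ 2 \<partial>M) = (\<integral>\<^sup>+x. indicator A x \<partial>M)"
    by (intro nn_integral_cong) (simp add: indicator_def)
  also have "\<dots> = ennreal (measure M A)"
    using A by (simp add: emeasure_eq_ennreal_measure)
  also have "(\<integral>\<^sup>+x. ennreal \<bar>f x\<bar> * indicator A x \<partial>M) = (\<integral>\<^sup>+x. ennreal \<bar>f x\<bar> \<partial>M)"
    using support by (intro nn_integral_cong) (auto simp: indicator_def)
  also have "ennreal (\<integral>x. (f x)\<^sup>2 \<partial>M) * ennreal (measure M A)
      = ennreal (measure M A * (\<integral>x. (f x)\<^sup>2 \<partial>M))"
    by (simp add: mult.commute ennreal_mult'')
  finally have CS: "(\<integral>\<^sup>+x. ennreal \<bar>f x\<bar> \<partial>M)\<^sup>2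
      \<le> ennreal (measure M A * (\<integral>x. (f x)\<^sup>2 \<partial>M))" .
  then have "(\<integral>\<^sup>+x. ennreal \<bar>f x\<bar> \<partial>M)\<^sup>2 < \<infinity>"
    by (rule order.strict_trans1) simp
  then have "(\<integral>\<^sup>+x. ennreal \<bar>f x\<bar> \<partial>M) < \<infinity>"
    by (simp add: power_less_top_ennreal)
  then show f1: "integrable M f"
    by (simp add: integrable_iff_bounded)
  have "(\<integral>\<^sup>+x. ennreal \<bar>f x\<bar> \<partial>M) = ennreal (\<integral>x. \<bar>f x\<bar> \<partial>M)"
    using f1 by (intro nn_integral_eq_integral) auto
  with CS have "ennreal ((\<integral>x. \<bar>f x\<bar> \<partial>M)\<^sup>2) \<le> ennreal (measure M A * (\<integral>x. (f x)\<^sup>2 \<partial>M))"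
    by (simp add: ennreal_power)
  moreover have "0 \<le> measure M A * (\<integral>x. (f x)\<^sup>2 \<partial>M)"
    by simp
  ultimately show "(\<integral>x. \<bar>f x\<bar> \<partial>M)\<^sup>2 \<le> measure M A * (\<integral>x. (f x)\<^sup>2 \<partial>M)"
    by simp
qed

lemma integral_indicator_01_ge:
  fixes f :: "real \<Rightarrow> real"
  assumes f: "f \<in> borel_measurable borel" and f_ge: "\<And>y. c \<le> f y"
    and f_bounded: "\<And>y. \<bar>f y\<bar> \<le> B"
  shows "c \<le> (\<integral>y. indicator {0..1} y * f y \<partial>lborel)"
proof -
  have indicator_01: "integrable lborel (indicator {0..1} :: real \<Rightarrow> real)"
    by (rule integrable_real_indicator) auto
  have "c = (\<integral>y. indicator {0..1} (y::real) * c \<partial>lborel)"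
    by simp
  also have "\<dots> \<le> (\<integral>y. indicator {0..1} y * f y \<partial>lborel)"
  proof (rule integral_mono)
    show "integrable lborel (\<lambda>y. indicator {0..1} (y::real) * c)"
      using indicator_01 by simp
    show "integrable lborel (\<lambda>y. indicator {0..1} y * f y)"
      using f f_bounded by (intro integrable_mult_bounded[OF indicator_01]) simp_all
    show "indicator {0..1} y * c \<le> indicator {0..1} y * f y" for y
      using f_ge[of y] by (simp add: indicator_def)
  qed
  finally show ?thesis .
qed

lemma exp_sums_real: "(\<lambda>n. x ^ n / fact n) sums exp (x :: real)"
  using exp_converges[of x] by (simp add: divide_inverse mult.commute)

definition primitive :: "(real \<Rightarrow> real) \<Rightarrow> real \<Rightarrow> real" where
  "primitive a x = (\<integral>s. indicator {0..x} s * a s \<partial>lborel)"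

lemma primitive_0 [simp]: "primitive a 0 = 0"
  unfolding primitive_def
  by (rule integral_eq_zero_AE)
     (use AE_lborel_singleton[of 0] in \<open>eventually_elim, auto simp: indicator_def\<close>)

lemma primitive_cmult: "primitive (\<lambda>s. c * a s) x = c * primitive a x"
  unfolding primitive_def by (simp add: mult.left_commute)

lemma continuous_on_primitive:
  assumes "integrable lborel a"
  shows "continuous_on UNIV (primitive a)"
proof -
  have "continuous_on UNIV (\<lambda>x. LBINT s:{0..x}. a s)"
    using assms integrable_mult_indicator[of _ lborel a]
    by (intro continuous_on_LBINT) (auto simp: set_integrable_def)
  then show ?thesis
    by (simp add: primitive_def set_lebesgue_integral_def)
qed

lemma borel_measurable_primitive:
  "integrable lborel a \<Longrightarrow> primitive a \<in> borel_measurable borel"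
  by (rule borel_measurable_continuous_onI) (rule continuous_on_primitive)

lemma abs_primitive_le:
  assumes "integrable lborel a"
  shows "\<bar>primitive a x\<bar> \<le> (\<integral>s. \<bar>a s\<bar> \<partial>lborel)"
proof -
  have "\<bar>primitive a x\<bar> \<le> (\<integral>s. \<bar>indicator {0..x} s * a s\<bar> \<partial>lborel)"
    unfolding primitive_def by (rule integral_abs_bound)
  also have "\<dots> \<le> (\<integral>s. \<bar>a s\<bar> \<partial>lborel)"
    using assms integrable_mult_indicator[of "{0..x}" lborel a]
    by (intro integral_mono) (auto simp: indicator_def)
  finally show ?thesis .
qed

lemma primitive_mult_primitive:
  fixes f g :: "real \<Rightarrow> real"
  assumes f: "integrable lborel f" and g: "integrable lborel g"
  shows "primitive f x * primitive g x
       = primitive (\<lambda>t. g t * primitive f t) x + primitive (\<lambda>s. f s * primitive g s) x"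
proof -
  have [measurable]: "f \<in> borel_measurable borel" "g \<in> borel_measurable borel"
    using f g by auto
  have fg: "integrable (lborel \<Otimes>\<^sub>M lborel) (\<lambda>p. f (fst p) * g (snd p))"
    by (rule lborel_pair.integrable_mult_fst_snd[OF f g])
  define k where "k p = f (fst p) * g (snd p) * of_bool (0 \<le> fst p \<and> fst p \<le> snd p \<and> snd p \<le> x)"
    for p :: "real \<times> real"
  define l where "l p = f (fst p) * g (snd p) * of_bool (0 \<le> snd p \<and> snd p < fst p \<and> fst p \<le> x)"
    for p :: "real \<times> real"
  have k: "integrable (lborel \<Otimes>\<^sub>M lborel) k" and l: "integrable (lborel \<Otimes>\<^sub>M lborel) l"
    unfolding k_def[abs_def] l_def[abs_def]
    by (rule integrable_mult_bounded[OF fg, where C = 1]; simp)+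
  have k_inner: "(\<integral>s. k (s, t) \<partial>lborel) = indicator {0..x} t * g t * primitive f t" for t
  proof -
    have "k (s, t) = indicator {0..x} t * g t * (indicator {0..t} s * f s)" for s
      by (auto simp: k_def indicator_def)
    then show ?thesis
      by (simp add: primitive_def)
  qed
  have l_inner: "(\<integral>t. l (s, t) \<partial>lborel) = indicator {0..x} s * f s * primitive g s" for s
  proof -
    have "AE t in lborel. l (s, t) = indicator {0..x} s * f s * (indicator {0..s} t * g t)"
      using AE_lborel_singleton[of s] by eventually_elim (auto simp: l_def indicator_def)
    then have "(\<integral>t. l (s, t) \<partial>lborel)
        = (\<integral>t. indicator {0..x} s * f s * (indicator {0..s} t * g t) \<partial>lborel)"
      by (intro integral_cong_AE) (simp_all add: l_def)
    then show ?thesis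
      by (simp add: primitive_def)
  qed
  have split: "k (s, t) + l (s, t) = indicator {0..x} s * f s * (indicator {0..x} t * g t)" for s t
    by (auto simp: k_def l_def indicator_def)
  have "primitive f x * primitive g x = (\<integral>s. (\<integral>t. k (s, t) + l (s, t) \<partial>lborel) \<partial>lborel)"
    by (simp add: split primitive_def)
  also have "\<dots> = (\<integral>t. (\<integral>s. k (s, t) \<partial>lborel) \<partial>lborel) + (\<integral>s. (\<integral>t. l (s, t) \<partial>lborel) \<partial>lborel)"
    by (rule lborel_pair.iterated_integral_add_swap[OF k l])
  finally show ?thesis
    unfolding k_inner l_inner primitive_def[of "\<lambda>t. g t * primitive f t"]
      primitive_def[of "\<lambda>s. f s * primitive g s"]
    by (simp only: mult.assoc)
qed

lemma integrable_mult_primitive_power: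
  assumes a: "integrable lborel a"
  shows "integrable lborel (\<lambda>t. a t * primitive a t ^ n)"
proof (rule integrable_mult_bounded[OF a])
  show "(\<lambda>t. primitive a t ^ n) \<in> borel_measurable lborel"
    using borel_measurable_primitive[OF a] by simp
  show "\<bar>primitive a t ^ n\<bar> \<le> (\<integral>s. \<bar>a s\<bar> \<partial>lborel) ^ n" for t
    unfolding power_abs by (rule power_mono[OF abs_primitive_le[OF a]]) simp
qed

lemma primitive_power:
  assumes a: "integrable lborel a"
  shows "primitive a x ^ Suc n = real (Suc n) * primitive (\<lambda>t. a t * primitive a t ^ n) x"
proof (induction n arbitrary: x)
  case 0
  then show ?case by (simp add: primitive_def)
next
  case (Suc n)
  define g where "g = (\<lambda>t. real (Suc n) * (a t * primitive a t ^ n))"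
  have g: "integrable lborel g"
    unfolding g_def by (intro integrable_mult_right integrable_mult_primitive_power a)
  have primitive_g: "primitive g t = primitive a t ^ Suc n" for t
    using Suc.IH by (simp add: g_def primitive_cmult)
  have "primitive a x ^ Suc (Suc n) = primitive a x * primitive g x"
    by (simp add: primitive_g)
  also have "\<dots> = primitive (\<lambda>t. g t * primitive a t) x + primitive (\<lambda>s. a s * primitive g s) x"
    by (rule primitive_mult_primitive[OF a g])
  also have "(\<lambda>t. g t * primitive a t) = (\<lambda>t. real (Suc n) * (a t * primitive a t ^ Suc n))"
    by (simp add: g_def fun_eq_iff mult_ac)
  also have "primitive (\<lambda>t. real (Suc n) * (a t * primitive a t ^ Suc n)) x
      + primitive (\<lambda>s. a s * primitive g s) x
      = real (Suc (Suc n)) * primitive (\<lambda>t. a t * primitive a t ^ Suc n) x"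
    by (simp only: primitive_g primitive_cmult) (simp add: algebra_simps)
  finally show ?case .
qed

lemma sums_primitive:
  assumes a: "integrable lborel a" and h: "\<And>n. h n \<in> borel_measurable borel"
    and bound: "\<And>n t. \<bar>h n t\<bar> \<le> \<bar>a t\<bar> * b n" and b: "summable b"
    and sums: "\<And>t. (\<lambda>n. h n t) sums H t"
  shows "(\<lambda>n. primitive (h n) x) sums primitive H x"
proof -
  define f where "f = (\<lambda>n t. indicator {0..x} t * h n t)"
  have f_bound: "norm (f n t) \<le> \<bar>a t\<bar> * b n" for n t
  proof -
    have "norm (f n t) \<le> \<bar>h n t\<bar>"
      by (simp add: f_def indicator_def)
    also have "\<dots> \<le> \<bar>a t\<bar> * b n"
      by (rule bound)
    finally show ?thesis .
  qed
  have f: "integrable lborel (f n)" for n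
  proof (rule Bochner_Integration.integrable_bound)
    show "integrable lborel (\<lambda>t. \<bar>a t\<bar> * b n)"
      using a by simp
    show "f n \<in> borel_measurable lborel"
      using h[of n] unfolding f_def by measurable
    show "AE t in lborel. norm (f n t) \<le> norm (\<bar>a t\<bar> * b n)"
      using f_bound by (intro AE_I2) (simp add: order.trans[OF _ abs_ge_self])
  qed
  have "summable (\<lambda>n. norm (f n t))" for t
    by (rule summable_comparison_test'[OF summable_mult[OF b, of "\<bar>a t\<bar>"]]) (use f_bound in simp)
  moreover have "summable (\<lambda>n. \<integral>t. norm (f n t) \<partial>lborel)"
  proof (rule summable_comparison_test'[OF summable_mult[OF b]])
    fix n
    have "(\<integral>t. norm (f n t) \<partial>lborel) \<le> (\<integral>t. \<bar>a t\<bar> * b n \<partial>lborel)"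
      using f a f_bound by (intro integral_mono) auto
    then show "norm (\<integral>t. norm (f n t) \<partial>lborel) \<le> (\<integral>t. \<bar>a t\<bar> \<partial>lborel) * b n"
      by simp
  qed
  ultimately have "(\<lambda>n. integral\<^sup>L lborel (f n)) sums (\<integral>t. (\<Sum>n. f n t) \<partial>lborel)"
    by (intro sums_integral f) auto
  moreover have "(\<Sum>n. f n t) = indicator {0..x} t * H t" for t
    unfolding f_def by (rule sums_unique[symmetric]) (rule sums_mult[OF sums])
  ultimately show ?thesis
    by (simp add: primitive_def f_def)
qed

lemma exp_primitive:
  assumes a: "integrable lborel a"
  shows "exp (c * primitive a x) - 1 = c * primitive (\<lambda>t. a t * exp (c * primitive a t)) x"
proof -
  define C where "C = (\<integral>s. \<bar>a s\<bar> \<partial>lborel)"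
  define h where "h = (\<lambda>n t. a t * ((c * primitive a t) ^ n / fact n))"
  have [measurable]: "primitive a \<in> borel_measurable borel"
    using borel_measurable_primitive[OF a] .
  have [measurable]: "a \<in> borel_measurable borel"
    using a by auto
  have "h n \<in> borel_measurable borel" for n
    unfolding h_def by measurable
  moreover have "\<bar>h n t\<bar> \<le> \<bar>a t\<bar> * ((\<bar>c\<bar> * C) ^ n / fact n)" for n t
    using abs_primitive_le[OF a, of t]
    by (auto simp: h_def C_def abs_mult power_abs power_mult_distrib
        intro!: mult_left_mono divide_right_mono power_mono)
  moreover have "summable (\<lambda>n. (\<bar>c\<bar> * C) ^ n / fact n)"
    using exp_sums_real by (rule sums_summable)
  moreover have "(\<lambda>n. h n t) sums (a t * exp (c * primitive a t))" for t
    unfolding h_def by (intro sums_mult exp_sums_real)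
  ultimately have "(\<lambda>n. primitive (h n) x) sums primitive (\<lambda>t. a t * exp (c * primitive a t)) x"
    by (rule sums_primitive[OF a])
  then have "(\<lambda>n. c * primitive (h n) x) sums (c * primitive (\<lambda>t. a t * exp (c * primitive a t)) x)"
    by (rule sums_mult)
  moreover have "c * primitive (h n) x = (c * primitive a x) ^ Suc n / fact (Suc n)" for n
  proof -
    have "h n = (\<lambda>t. c ^ n / fact n * (a t * primitive a t ^ n))"
      by (simp add: h_def fun_eq_iff power_mult_distrib)
    then have "primitive (h n) x = c ^ n / fact n * (primitive a x ^ Suc n / real (Suc n))"
      using primitive_power[OF a, of x n] by (simp only: primitive_cmult) (simp del: of_nat_Suc)
    then show ?thesis
      by (simp add: power_mult_distrib field_simps)
  qed
  moreover have
    "(\<lambda>n. (c * primitive a x) ^ Suc n / fact (Suc n)) sums (exp (c * primitive a x) - 1)"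
    using exp_sums_real[of "c * primitive a x"] by (subst sums_Suc_iff) simp
  ultimately show ?thesis
    using sums_unique2 by simp
qed

lemma in_L2_01_borel_representative:
  assumes "in_L2_01 u"
  obtains a where "a \<in> borel_measurable borel" "\<And>x. x \<notin> {0..1} \<Longrightarrow> a x = 0"
    "AE x in lebesgue. indicator {0..1} x * u x = a x"
proof -
  have u: "(\<lambda>x. indicator {0..1} x * u x) \<in> borel_measurable lebesgue"
    using assms by (simp add: in_L2_01_def set_borel_measurable_def)
  obtain b where b: "b \<in> borel_measurable lborel"
    and u_b: "AE x in lborel. indicator {0..1} x * u x = b x"
    using completion_ex_borel_measurable_real[OF u] by blast
  have "AE x in lborel. indicator {0..1} x * u x = indicator {0..1} x * b x"
    using u_b by eventually_elim (auto simp: indicator_def of_bool_def split: if_splits)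
  then have "AE x in lebesgue. indicator {0..1} x * u x = indicator {0..1} x * b x"
    by (rule AE_completion)
  moreover have "(\<lambda>x. indicator {0..1} x * b x) \<in> borel_measurable borel"
    using b by simp
  ultimately show ?thesis
    using that[of "\<lambda>x. indicator {0..1} x * b x"] by simp
qed

lemma
  assumes u: "in_L2_01 u" and u_a: "AE x in lebesgue. indicator {0..1} x * u x = a x"
    and a[measurable]: "a \<in> borel_measurable borel"
  shows integrable_square_representative: "integrable lborel (\<lambda>x. (a x)\<^sup>2)"
    and L2norm01_eq_representative: "L2norm01 u = sqrt (\<integral>x. (a x)\<^sup>2 \<partial>lborel)"
proof -
  have u2: "integrable lebesgue (\<lambda>x. indicator {0..1} x * (u x)\<^sup>2)"
    using u by (simp add: in_L2_01_def set_integrable_def)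
  have u2_a2: "AE x in lebesgue. indicator {0..1} x * (u x)\<^sup>2 = (a x)\<^sup>2"
    using u_a by eventually_elim (auto simp: indicator_def power2_eq_square)
  have "a \<in> borel_measurable lebesgue"
    by (intro measurable_completion) simp
  then have a2_lebesgue: "integrable lebesgue (\<lambda>x. (a x)\<^sup>2)"
    using u2 u2_a2
    by (subst integrable_cong_AE[symmetric]) (auto intro: borel_measurable_integrable)
  then show "integrable lborel (\<lambda>x. (a x)\<^sup>2)"
    by (subst (asm) integrable_completion) simp_all
  have "L2norm01 u = sqrt (\<integral>x. indicator {0..1} x * (u x)\<^sup>2 \<partial>lebesgue)"
    by (simp add: L2norm01_def set_lebesgue_integral_def)
  also have "\<dots> = sqrt (\<integral>x. (a x)\<^sup>2 \<partial>lborel)"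
    using u2 u2_a2 a2_lebesgue
    by (subst integral_cong_AE[of _ _ "\<lambda>x. (a x)\<^sup>2"])
       (auto intro: borel_measurable_integrable simp: integral_completion)
  finally show "L2norm01 u = sqrt (\<integral>x. (a x)\<^sup>2 \<partial>lborel)" .
qed

lemma in_L2_01_integrable_representative:
  assumes "in_L2_01 u"
  obtains a where "integrable lborel a" "(\<integral>x. \<bar>a x\<bar> \<partial>lborel) \<le> L2norm01 u"
    "AE x in lebesgue. indicator {0..1} x * u x = a x"
proof -
  obtain a where a: "a \<in> borel_measurable borel" and support: "\<And>x. x \<notin> {0..1} \<Longrightarrow> a x = 0"
    and u_a: "AE x in lebesgue. indicator {0..1} x * u x = a x"
    using in_L2_01_borel_representative[OF assms] by blast
  have a2: "integrable lborel (\<lambda>x. (a x)\<^sup>2)"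
    by (rule integrable_square_representative[OF assms u_a a])
  have "integrable lborel a"
    and "(\<integral>x. \<bar>a x\<bar> \<partial>lborel)\<^sup>2 \<le> measure lborel {0..1::real} * (\<integral>x. (a x)\<^sup>2 \<partial>lborel)"
    using integrable_and_integral_abs_squared_le[of a lborel "{0..1}"] a a2 support by auto
  moreover from this(2) have "(\<integral>x. \<bar>a x\<bar> \<partial>lborel) \<le> L2norm01 u"
    unfolding L2norm01_eq_representative[OF assms u_a a] by (simp add: real_le_rsqrt)
  ultimately show ?thesis
    using that u_a by blast
qed

lemma
  fixes u v :: "real \<Rightarrow> real"
  assumes u: "in_L2_01 u" and v: "set_borel_measurable lebesgue {0..1} v"
    and v_le: "\<And>x. x \<in> {0..1} \<Longrightarrow> \<bar>v x\<bar> \<le> C"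
  shows in_L2_01_mult_bounded: "in_L2_01 (\<lambda>x. u x * v x)"
    and L2norm01_mult_bounded_le: "L2norm01 (\<lambda>x. u x * v x) \<le> C * L2norm01 u"
proof -
  have [measurable]: "(\<lambda>x. indicator {0..1} x * u x) \<in> borel_measurable lebesgue"
    "(\<lambda>x. indicator {0..1} x * v x) \<in> borel_measurable lebesgue"
    and u2: "integrable lebesgue (\<lambda>x. indicator {0..1} x * (u x)\<^sup>2)"
    using u v by (simp_all add: in_L2_01_def set_borel_measurable_def set_integrable_def)
  have C: "0 \<le> C"
    using v_le[of 0] by simp
  have v2_le: "(indicator {0..1} x * v x)\<^sup>2 \<le> C\<^sup>2" for x
    using v_le[of x] C by (cases "x \<in> {0..1}") (auto simp: abs_le_square_iff[symmetric])
  have uv: "indicator {0..1} x * (u x * v x)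
      = indicator {0..1} x * u x * (indicator {0..1} x * v x)"
    and uv2: "indicator {0..1} x * (u x * v x)\<^sup>2
      = indicator {0..1} x * (u x)\<^sup>2 * (indicator {0..1} x * v x)\<^sup>2" for x
    by (simp_all add: indicator_def power2_eq_square)
  have uv2_integrable: "integrable lebesgue (\<lambda>x. indicator {0..1} x * (u x * v x)\<^sup>2)"
    unfolding uv2 by (rule integrable_mult_bounded[OF u2]) (use v2_le in simp_all)
  moreover have "(\<lambda>x. indicator {0..1} x * (u x * v x)) \<in> borel_measurable lebesgue"
    unfolding uv by measurable
  ultimately show "in_L2_01 (\<lambda>x. u x * v x)"
    by (simp add: in_L2_01_def set_borel_measurable_def set_integrable_def)
  have "(LINT x:{0..1}|lebesgue. (u x * v x)\<^sup>2)
      = (\<integral>x. indicator {0..1} x * (u x * v x)\<^sup>2 \<partial>lebesgue)"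
    by (simp add: set_lebesgue_integral_def)
  also have "\<dots> \<le> (\<integral>x. indicator {0..1} x * (u x)\<^sup>2 * C\<^sup>2 \<partial>lebesgue)"
    using uv2_integrable u2 v2_le unfolding uv2 by (intro integral_mono mult_left_mono) simp_all
  also have "\<dots> = C\<^sup>2 * (LINT x:{0..1}|lebesgue. (u x)\<^sup>2)"
    by (simp add: set_lebesgue_integral_def)
  finally have "sqrt (LINT x:{0..1}|lebesgue. (u x * v x)\<^sup>2)
      \<le> sqrt (C\<^sup>2 * (LINT x:{0..1}|lebesgue. (u x)\<^sup>2))"
    by (rule real_sqrt_le_mono)
  then show "L2norm01 (\<lambda>x. u x * v x) \<le> C * L2norm01 u"
    using C by (simp add: L2norm01_def real_sqrt_mult)
qed

context
  fixes u a :: "real \<Rightarrow> real"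
  assumes u: "set_borel_measurable lebesgue {0..1} u"
    and a: "integrable lborel a"
    and u_a: "AE x in lebesgue. indicator {0..1} x * u x = a x"
begin

lemma set_integral_eq_primitive:
  assumes h[measurable]: "h \<in> borel_measurable borel" and "x \<le> 1"
  shows "(LINT s:{0..x}|lebesgue. u s * h s) = primitive (\<lambda>s. a s * h s) x"
proof -
  have [measurable]: "a \<in> borel_measurable borel"
    using a by auto
  have [measurable]: "a \<in> borel_measurable lebesgue" "h \<in> borel_measurable lebesgue"
    "(indicator {0..x} :: real \<Rightarrow> real) \<in> borel_measurable lebesgue"
    by (auto intro: measurable_completion)
  have [measurable]: "(\<lambda>s. indicator {0..1} s * u s) \<in> borel_measurable lebesgue"
    using u by (simp add: set_borel_measurable_def)
  have "(LINT s:{0..x}|lebesgue. u s * h s)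
      = (\<integral>s. indicator {0..x} s * (indicator {0..1} s * u s) * h s \<partial>lebesgue)"
    using \<open>x \<le> 1\<close> unfolding set_lebesgue_integral_def
    by (intro Bochner_Integration.integral_cong) (auto simp: indicator_def)
  also have "\<dots> = (\<integral>s. indicator {0..x} s * a s * h s \<partial>lebesgue)"
    using u_a by (intro integral_cong_AE) (auto elim!: eventually_mono)
  also have "\<dots> = primitive (\<lambda>s. a s * h s) x"
    by (simp add: integral_completion primitive_def mult.assoc)
  finally show ?thesis .
qed

lemma cole_hopf_eq_primitive:
  assumes "x \<in> {0..1}"
  shows "cole_hopf u x = exp (- (1/2) * primitive a x)
    / (\<integral>y. indicator {0..1} y * exp (- (1/2) * primitive a y) \<partial>lborel)"
proof -
  have [measurable]: "primitive a \<in> borel_measurable borel"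
    by (rule borel_measurable_primitive[OF a])
  have primitive_u: "(LINT s:{0..y}|lebesgue. u s) = primitive a y" if "y \<le> 1" for y
    using set_integral_eq_primitive[of "\<lambda>_. 1" y] that by simp
  have "(LINT y:{0..1}|lebesgue. exp (- (1/2) * (LINT s:{0..y}|lebesgue. u s)))
      = (LINT y:{0..1}|lebesgue. exp (- (1/2) * primitive a y))"
    by (rule set_lebesgue_integral_cong) (auto simp: primitive_u)
  also have "\<dots> = (\<integral>y. indicator {0..1} y * exp (- (1/2) * primitive a y) \<partial>lborel)"
    by (simp add: set_lebesgue_integral_def integral_completion)
  finally show ?thesis
    using assms by (simp add: cole_hopf_def primitive_u)
qed

lemma abs_cole_hopf_le:
  assumes "x \<in> {0..1}"
  shows "\<bar>cole_hopf u x\<bar> \<le> exp (\<integral>s. \<bar>a s\<bar> \<partial>lborel)"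
proof -
  define C where "C = (\<integral>s. \<bar>a s\<bar> \<partial>lborel)"
  define E where "E = (\<lambda>y. exp (- (1/2) * primitive a y))"
  have E_le: "E y \<le> exp (C / 2)" and E_ge: "exp (- C / 2) \<le> E y" for y
    using abs_primitive_le[OF a, of y] by (auto simp: E_def C_def)
  have D_ge: "exp (- C / 2) \<le> (\<integral>y. indicator {0..1} y * E y \<partial>lborel)"
    using borel_measurable_primitive[OF a] E_ge E_le
    by (intro integral_indicator_01_ge[where B = "exp (C / 2)"]) (simp_all add: E_def)
  then have D_pos: "0 < (\<integral>y. indicator {0..1} y * E y \<partial>lborel)"
    by (rule order.strict_trans2[rotated]) simp
  have "\<bar>cole_hopf u x\<bar> = E x / (\<integral>y. indicator {0..1} y * E y \<partial>lborel)"
    using cole_hopf_eq_primitive[OF assms] D_pos by (simp add: E_def)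
  also have "\<dots> \<le> exp (C / 2) / exp (- C / 2)"
    by (rule frac_le) (use E_le D_ge in auto)
  also have "\<dots> = exp C"
    by (simp add: exp_minus field_simps flip: exp_add)
  finally show ?thesis
    by (simp add: C_def)
qed

lemma set_borel_measurable_cole_hopf: "set_borel_measurable lebesgue {0..1} (cole_hopf u)"
proof -
  define E where "E = (\<lambda>y. exp (- (1/2) * primitive a y))"
  define D where "D = (\<integral>y. indicator {0..1} y * E y \<partial>lborel)"
  have [measurable]: "primitive a \<in> borel_measurable borel"
    by (rule borel_measurable_primitive[OF a])
  have "(\<lambda>x. indicator {0..1} x *\<^sub>R cole_hopf u x) = (\<lambda>x. indicator {0..1} x * (E x / D))"
    using cole_hopf_eq_primitive by (auto simp: fun_eq_iff indicator_def E_def D_def)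
  also have "\<dots> \<in> borel_measurable lebesgue"
    by (intro measurable_completion) (simp add: E_def)
  finally show ?thesis
    unfolding set_borel_measurable_def .
qed

lemma cole_hopf_eq_integral:
  assumes x: "x \<in> {0..1}"
  shows "cole_hopf u x = cole_hopf u 0 + (LINT s:{0..x}|lebesgue. u s * (- (1/2) * cole_hopf u s))"
proof -
  define E where "E = (\<lambda>y. exp (- (1/2) * primitive a y))"
  define D where "D = (\<integral>y. indicator {0..1} y * E y \<partial>lborel)"
  have cole_hopf_E: "cole_hopf u y = E y / D" if "y \<in> {0..1}" for y
    using cole_hopf_eq_primitive[OF that] by (simp add: E_def D_def)
  have [measurable]: "E \<in> borel_measurable borel"
    using borel_measurable_primitive[OF a] by (simp add: E_def)
  have "(LINT s:{0..x}|lebesgue. u s * (- (1/2) * cole_hopf u s))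
      = (LINT s:{0..x}|lebesgue. u s * (- (1/2) / D * E s))"
    using x by (intro set_lebesgue_integral_cong) (auto simp: cole_hopf_E)
  also have "\<dots> = primitive (\<lambda>s. a s * (- (1/2) / D * E s)) x"
    using x by (intro set_integral_eq_primitive) simp_all
  also have "(\<lambda>s. a s * (- (1/2) / D * E s)) = (\<lambda>s. - (1/2) / D * (a s * E s))"
    by (simp add: fun_eq_iff mult.left_commute)
  also have "primitive \<dots> x = - (1/2) / D * primitive (\<lambda>s. a s * E s) x"
    by (rule primitive_cmult)
  also have "\<dots> = (E x - 1) / D"
    unfolding E_def exp_primitive[OF a] by simp
  finally show ?thesis
    using x by (simp add: cole_hopf_E diff_divide_distrib E_def)
qed

lemma
  assumes "in_L2_01 u" and "(\<integral>s. \<bar>a s\<bar> \<partial>lborel) \<le> N"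
  shows in_L2_01_cole_hopf_derivative: "in_L2_01 (\<lambda>s. u s * (- (1/2) * cole_hopf u s))"
    and L2norm01_cole_hopf_derivative_le:
      "L2norm01 (\<lambda>s. u s * (- (1/2) * cole_hopf u s)) \<le> 1/2 * exp N * L2norm01 u"
proof -
  have [measurable]: "(\<lambda>x. indicator {0..1} x *\<^sub>R cole_hopf u x) \<in> borel_measurable lebesgue"
    using set_borel_measurable_cole_hopf by (simp add: set_borel_measurable_def)
  have scale: "(\<lambda>x. indicator {0..1} x *\<^sub>R (- (1/2) * cole_hopf u x))
      = (\<lambda>x. - (1/2) * (indicator {0..1} x *\<^sub>R cole_hopf u x))"
    by (simp add: fun_eq_iff)
  have v: "set_borel_measurable lebesgue {0..1} (\<lambda>s. - (1/2) * cole_hopf u s)"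
    unfolding set_borel_measurable_def scale by measurable
  have v_le: "\<bar>- (1/2) * cole_hopf u x\<bar> \<le> 1/2 * exp N" if "x \<in> {0..1}" for x
  proof -
    have "\<bar>cole_hopf u x\<bar> \<le> exp (\<integral>s. \<bar>a s\<bar> \<partial>lborel)"
      by (rule abs_cole_hopf_le[OF that])
    also have "\<dots> \<le> exp N"
      using assms(2) by simp
    finally show ?thesis
      by simp
  qed
  show "in_L2_01 (\<lambda>s. u s * (- (1/2) * cole_hopf u s))"
    by (rule in_L2_01_mult_bounded[OF assms(1) v v_le])
  show "L2norm01 (\<lambda>s. u s * (- (1/2) * cole_hopf u s)) \<le> 1/2 * exp N * L2norm01 u"
    by (rule L2norm01_mult_bounded_le[OF assms(1) v v_le])
qed

end

theorem mainTheorem5: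
  fixes u0 :: "real \<Rightarrow> real"
  assumes "in_L2_01 u0"
  defines "v0 \<equiv> cole_hopf u0"
  shows "(\<forall>x\<in>{0..1}. \<bar>v0 x\<bar> \<le> exp (L2norm01 u0))
       \<and> (\<exists>g. in_L2_01 g
              \<and> (\<forall>x\<in>{0..1}. v0 x = v0 0 + (LINT s:{0..x}|lebesgue. g s))
              \<and> L2norm01 g \<le> 1/2 * exp (L2norm01 u0) * L2norm01 u0)"
proof -
  obtain a where a: "integrable lborel a" and a_L1: "(\<integral>x. \<bar>a x\<bar> \<partial>lborel) \<le> L2norm01 u0"
    and u0_a: "AE x in lebesgue. indicator {0..1} x * u0 x = a x"
    using in_L2_01_integrable_representative[OF assms(1)] .
  have u0: "set_borel_measurable lebesgue {0..1} u0"
    using assms(1) by (simp add: in_L2_01_def)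
  define g where "g s = u0 s * (- (1/2) * v0 s)" for s
  have "\<bar>v0 x\<bar> \<le> exp (L2norm01 u0)" if "x \<in> {0..1}" for x
    using abs_cole_hopf_le[OF u0 a u0_a that] a_L1 unfolding v0_def
    by (meson exp_le_cancel_iff order.trans)
  moreover have "v0 x = v0 0 + (LINT s:{0..x}|lebesgue. g s)" if "x \<in> {0..1}" for x
    unfolding g_def v0_def by (rule cole_hopf_eq_integral[OF u0 a u0_a that])
  moreover have "in_L2_01 g"
    unfolding g_def v0_def by (rule in_L2_01_cole_hopf_derivative[OF u0 a u0_a assms(1) a_L1])
  moreover have "L2norm01 g \<le> 1/2 * exp (L2norm01 u0) * L2norm01 u0"
    unfolding g_def v0_def by (rule L2norm01_cole_hopf_derivative_le[OF u0 a u0_a assms(1) a_L1])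
  ultimately show ?thesis
    by blast
qed

end
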